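(* Let $\mathsf{G}M_0>0$, $R_0>0$, $\Omega\in\mathbb{R}$ and $R>R_0$. For $\bm{x}=(x^1,x^2,x^3)\in\mathbb{R}^3$ put $r=\|\bm{x}\|$, $\varpi=\sqrt{(x^1)^2+(x^2)^2}$, and let $$\Upsilon(\bm{x})=\mathsf{G}M_0\Big(\frac1r-\frac1R\Big)+\frac{\Omega^2}{2}\varpi^2 .$$ Let $\mathfrak{U}_0$ be the connected component of the open set $\{\bm{x}:\ r>R_0,\ \Upsilon(\bm{x})>0\}$ which contains the shell $\{R_0<r<R\}$, and put $\kappa=\dfrac{\Omega^2R_0^3}{2\mathsf{G}M_0}$. Then the following are equivalent: (i) $\mathfrak{U}_0$ is bounded, i.e. the axially and equatorially symmetric static stationary density $\rho=\big(\frac{\gamma-1}{\mathsf{A}\gamma}\Upsilon\big)^{1/(\gamma-1)}1_{\mathfrak{U}_0}$ (with zero relative velocity, constants $\mathsf{A}>0$, $1<\gamma<2$) is compactly supported, its stratosphere height at the North Pole being $R-R_0$; (ii) $\kappa\le \dfrac{4}{27}\Big(\dfrac{R_0}{R}\Big)^3$.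
   Context: This concerns static stationary solutions ($\bm v=\bm 0$) of the isentropic compressible Euler equations in a frame rotating with constant angular velocity $\Omega$ about the $x^3$-axis, outside the ball $\{r\le R_0\}$, with geopotential $-\mathsf{G}M_0/r-\Omega^2\varpi^2/2$ and pressure $P=\mathsf{A}\rho^\gamma$; for such solutions $\Upsilon=\frac{\mathsf{A}\gamma}{\gamma-1}\rho^{\gamma-1}$ equals $-(\text{geopotential})-\mathsf{G}M_0/R$ where positive. *)

theory Defs
  imports "HOL-Analysis.Analysis"
begin

definition varpi :: "real^3 \<Rightarrow> real" where
  "varpi x = sqrt ((x$1)^2 + (x$2)^2)"

definition Upsilon :: "real \<Rightarrow> real \<Rightarrow> real \<Rightarrow> real^3 \<Rightarrow> real" where
  "Upsilon GM0 \<Omega> R x = GM0 * (1 / norm x - 1 / R) + \<Omega>^2 / 2 * (varpi x)^2"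

definition posRegion :: "real \<Rightarrow> real \<Rightarrow> real \<Rightarrow> real \<Rightarrow> (real^3) set" where
  "posRegion GM0 R0 \<Omega> R = {x. norm x > R0 \<and> Upsilon GM0 \<Omega> R x > 0}"

definition shell :: "real \<Rightarrow> real \<Rightarrow> (real^3) set" where
  "shell R0 R = {x. R0 < norm x \<and> norm x < R}"

definition kappa :: "real \<Rightarrow> real \<Rightarrow> real \<Rightarrow> real" where
  "kappa GM0 R0 \<Omega> = \<Omega>^2 * R0^3 / (2 * GM0)"

end

theory Submission
  imports Defs
begin

text \<open>Write \<open>a = \<Omega>\<^sup>2/2\<close> and \<open>g = GM0\<close>. Since \<open>varpi \<le> r\<close> with equality on the equatorial
  plane, the extent of \<open>\<Upsilon> > 0\<close> is governed by the radial profile \<open>g (1/t - 1/R) + a t\<^sup>2\<close>,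
  and the condition on \<open>\<kappa>\<close> says exactly \<open>a \<le> 4 g / (27 R\<^sup>3)\<close>. For the critical value
  \<open>a = 4 g / (27 R\<^sup>3)\<close> the profile equals \<open>g (2t - 3R)\<^sup>2 (t + 3R) / (27 R\<^sup>3 t)\<close>, with a double zero
  at \<open>t = 3R/2\<close>. Hence for \<open>a\<close> above the critical value the profile is positive on the whole
  equatorial half-line \<open>t > R\<^sub>0\<close>, which is connected, meets the shell and therefore lies in the
  unbounded component \<open>U\<^sub>0\<close>; for \<open>a\<close> at most critical \<open>\<Upsilon> \<le> 0\<close> on the sphere \<open>r = 3R/2\<close>,
  which the connected set \<open>U\<^sub>0\<close> cannot cross, so \<open>U\<^sub>0\<close> stays inside that sphere.\<close>

lemma norm_vec3_power2: "(norm (x :: real^3))\<^sup>2 = (x$1)\<^sup>2 + (x$2)\<^sup>2 + (x$3)\<^sup>2"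
  by (simp only: power2_norm_eq_inner) (simp add: inner_vec_def sum_3 power2_eq_square)

lemma varpi_le_norm: "varpi x \<le> norm x"
  unfolding varpi_def by (rule real_le_lsqrt) (simp_all add: norm_vec3_power2)

lemma varpi_scaleR_axis1: "varpi (t *\<^sub>R axis 1 1) = \<bar>t\<bar>"
  by (simp add: varpi_def axis_def)

lemma Upsilon_le_radial:
  "Upsilon GM0 \<Omega> R x \<le> GM0 * (1 / norm x - 1 / R) + \<Omega>\<^sup>2 / 2 * (norm x)\<^sup>2"
  unfolding Upsilon_def using varpi_le_norm[of x]
  by (intro add_left_mono mult_left_mono power_mono) (auto simp: varpi_def)

lemma Upsilon_scaleR_axis1:
  "Upsilon GM0 \<Omega> R (t *\<^sub>R axis 1 1) = GM0 * (1 / \<bar>t\<bar> - 1 / R) + \<Omega>\<^sup>2 / 2 * t\<^sup>2"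
  by (simp add: Upsilon_def varpi_scaleR_axis1)

lemma critical_profile_eq:
  fixes g R t :: real
  assumes "R \<noteq> 0" and "t \<noteq> 0"
  shows "g * (1 / t - 1 / R) + 4 * g / (27 * R^3) * t\<^sup>2
    = g * (2 * t - 3 * R)\<^sup>2 * (t + 3 * R) / (27 * R^3 * t)"
  using assms by (simp add: field_simps power2_eq_square power3_eq_cube)

lemma profile_pos_if_supercritical:
  fixes g R t a :: real
  assumes "g \<ge> 0" and "R > 0" and "t > 0" and "a > 4 * g / (27 * R^3)"
  shows "g * (1 / t - 1 / R) + a * t\<^sup>2 > 0"
proof -
  have "0 \<le> g * (2 * t - 3 * R)\<^sup>2 * (t + 3 * R) / (27 * R^3 * t)"
    using assms by simp
  also have "\<dots> = g * (1 / t - 1 / R) + 4 * g / (27 * R^3) * t\<^sup>2"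
    using assms by (intro critical_profile_eq[symmetric]) auto
  also have "\<dots> < g * (1 / t - 1 / R) + a * t\<^sup>2"
    using assms by (intro add_strict_left_mono mult_strict_right_mono) auto
  finally show ?thesis .
qed

lemma profile_nonpos_if_subcritical:
  fixes g R a :: real
  assumes "R > 0" and "a \<le> 4 * g / (27 * R^3)"
  shows "g * (1 / (3 * R / 2) - 1 / R) + a * (3 * R / 2)\<^sup>2 \<le> 0"
proof -
  have "g * (1 / (3 * R / 2) - 1 / R) + a * (3 * R / 2)\<^sup>2
      \<le> g * (1 / (3 * R / 2) - 1 / R) + 4 * g / (27 * R^3) * (3 * R / 2)\<^sup>2"
    using assms by (intro add_left_mono mult_right_mono) auto
  also have "\<dots> = 0"
    using assms by (subst critical_profile_eq) simp_all
  finally show ?thesis .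
qed

lemma kappa_le_iff:
  assumes "GM0 > 0" and "R0 > 0" and "R > 0"
  shows "kappa GM0 R0 \<Omega> \<le> 4 / 27 * (R0 / R)^3 \<longleftrightarrow> \<Omega>\<^sup>2 / 2 \<le> 4 * GM0 / (27 * R^3)"
  using assms by (simp add: kappa_def power_divide field_simps)

lemma posRegion_disjoint_sphere:
  assumes "R > 0" and "\<Omega>\<^sup>2 / 2 \<le> 4 * GM0 / (27 * R^3)"
  shows "posRegion GM0 R0 \<Omega> R \<inter> sphere 0 (3 * R / 2) = {}"
proof -
  have "Upsilon GM0 \<Omega> R x \<le> 0" if "norm x = 3 * R / 2" for x
    using Upsilon_le_radial[of GM0 \<Omega> R x] profile_nonpos_if_subcritical[OF assms] that
    by simp
  then show ?thesis
    by (force simp: posRegion_def)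
qed

lemma equatorial_halfline_subset_posRegion:
  assumes "GM0 \<ge> 0" and "R0 \<ge> 0" and "R > 0" and "\<Omega>\<^sup>2 / 2 > 4 * GM0 / (27 * R^3)"
  shows "(\<lambda>t. t *\<^sub>R axis 1 1) ` {R0<..} \<subseteq> posRegion GM0 R0 \<Omega> R"
  using profile_pos_if_supercritical[OF assms(1,3) _ assms(4)] assms(2)
  by (auto simp: posRegion_def Upsilon_scaleR_axis1)

lemma not_bounded_halfline:
  fixes v :: "'a :: real_normed_vector"
  assumes "v \<noteq> 0"
  shows "\<not> bounded ((\<lambda>t. t *\<^sub>R v) ` {c<..})"
proof
  assume "bounded ((\<lambda>t. t *\<^sub>R v) ` {c<..})"
  then obtain B where B: "\<And>t. t > c \<Longrightarrow> \<bar>t\<bar> * norm v \<le> B"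
    by (auto simp: bounded_iff)
  define t where "t = max c (B / norm v) + 1"
  have "B / norm v < \<bar>t\<bar>"
    unfolding t_def by linarith
  then have "B < \<bar>t\<bar> * norm v"
    using assms by (simp add: pos_divide_less_eq)
  moreover have "c < t"
    using max.cobounded1[of c "B / norm v"] unfolding t_def by linarith
  ultimately show False
    using B by fastforce
qed

theorem theorem1:
  fixes GM0 R0 \<Omega> R :: real and U0 :: "(real^3) set"
  assumes "GM0 > 0" and "R0 > 0" and "R > R0"
    and "U0 \<in> components (posRegion GM0 R0 \<Omega> R)"
    and "shell R0 R \<subseteq> U0"
  shows "bounded U0 \<longleftrightarrow> kappa GM0 R0 \<Omega> \<le> 4 / 27 * (R0 / R)^3"
proof -
  let ?halfline = "(\<lambda>t. t *\<^sub>R axis 1 1) ` {R0<..} :: (real^3) set"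
  have "R > 0" using assms by linarith
  have U0: "connected U0" "U0 \<subseteq> posRegion GM0 R0 \<Omega> R"
    using assms(4) in_components_connected in_components_subset by blast+
  define p :: "real^3" where "p = ((R0 + R) / 2) *\<^sub>R axis 1 1"
  have "p \<in> shell R0 R" "p \<in> ?halfline"
    using assms(2,3) by (auto simp: p_def shell_def)
  then have p: "p \<in> U0" "p \<in> ?halfline" "p \<in> ball 0 (3 * R / 2)"
    using assms(5) by (auto simp: shell_def)
  have "bounded U0 \<longleftrightarrow> \<Omega>\<^sup>2 / 2 \<le> 4 * GM0 / (27 * R^3)"
  proof
    assume "bounded U0"
    show "\<Omega>\<^sup>2 / 2 \<le> 4 * GM0 / (27 * R^3)"
    proof (rule ccontr)
      assume "\<not> ?thesis"
      then have "?halfline \<subseteq> U0"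
        using assms(1,2) \<open>R > 0\<close> p
        by (intro components_maximal[OF assms(4)] equatorial_halfline_subset_posRegion
            connected_continuous_image continuous_intros) auto
      with \<open>bounded U0\<close> not_bounded_halfline[of "axis 1 1 :: real^3" R0] show False
        by (auto dest: bounded_subset simp: axis_eq_0_iff)
    qed
  next
    assume "\<Omega>\<^sup>2 / 2 \<le> 4 * GM0 / (27 * R^3)"
    from posRegion_disjoint_sphere[OF \<open>R > 0\<close> this, of R0]
    have "U0 \<inter> frontier (ball 0 (3 * R / 2)) = {}"
      using U0(2) \<open>R > 0\<close> by auto
    then have "U0 \<subseteq> ball 0 (3 * R / 2)"
      using connected_Int_frontier[OF U0(1)] p(1,3) by blast
    then show "bounded U0"
      using bounded_ball bounded_subset by blast
  qed
  with kappa_le_iff[OF assms(1,2) \<open>R > 0\<close>] show ?thesis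
    by simp
qed

end
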